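(* Under Assumptions (A1) and (A2), the mean field game $(F,\phi)$ admits at least one mixed stationary Nash equilibrium (MSNE).
   Context: Model: classes $c\in[C]$ with masses $m^c>0$, finite state sets $\mathcal S^c$, nonempty finite admissible action sets $\mathcal A^c(s)$ ($\mathcal A^c=\bigcup_s\mathcal A^c(s)$), transition kernels $\phi^c(\cdot\mid s,a)\in\mathcal P(\mathcal S^c)$, rates $\lambda^c>0$; $p=\sum_c|\mathcal S^c|$, $q=\sum_c|\mathcal A^c|$. Policies $u:\mathcal S^c\to\mathcal P(\mathcal A^c)$ with support in $\mathcal A^c(s)$; $\mathcal U^c_D$ = deterministic policies. $\phi^{c,u}_{ss'}=\sum_{a'\in\mathcal A^c(s')}\phi^c(s\mid s',a')u(a'\mid s')$. (A2): for all $c$ and $u\in\mathcal U^c_D$, $\phi^{c,u}$ has exactly one recurrent communicating class; $\eta^{c,u}$ is then the unique stationary distribution of the continuous-time chain with generator $\lambda^c(\phi^{c,u}-I)$. $X^c=\{\nu\in\mathbb R_{\ge0}^{\mathcal S^c\times\mathcal U^c_D}:\sum\nu=m^c\}$, $X=\prod_cX^c$; $X_{\mathcal S\times\mathcal A}=\prod_c\{\nu\in\mathbb R_{\ge0}^{\mathcal S^c\times\mathcal A^c}:\sum\nu=m^c\}$. For $\mu\in X$: $\mu^c_{\mathcal S\times\mathcal A}[s,a]=\sum_{u}\mu^c[s,u]u(a\mid s)$, $\mu^c[\mathcal S^c,u]=\sum_s\mu^c[s,u]$. Rewards $r^c:\mathcal S^c\times\mathcal A^c\times X_{\mathcal S\times\mathcal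 A}\to\mathbb R$. (A1): each $r^c(s,a,\cdot)$ extends to $\mathbb R_{\ge0}^{pq}$ and the extension is continuously differentiable in all coordinates on $X_{\mathcal S\times\mathcal A}$. $F^c_u(\mu)=\sum_{s\in\mathcal S^c}\sum_{a\in\mathcal A^c(s)}\eta^{c,u}(s)u(a\mid s)r^c(s,a,\mu_{\mathcal S\times\mathcal A})$ for $u\in\mathcal U^c_D$. MSNE: $\mu\in X$ such that for all $c$ and $u\in\mathcal U^c_D$: (i) $\mu^c[\mathcal S^c,u]>0\Rightarrow F^c_u(\mu)\ge F^c_v(\mu)$ for all $v\in\mathcal U^c_D$; (ii) $\mu^c[s,u]=\eta^{c,u}(s)\mu^c[\mathcal S^c,u]$ for all $s\in\mathcal S^c$. *)

theory Defs
  imports "HOL-Analysis.Analysis" "HOL-Library.FuncSet"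
begin

text \<open>
States of class c form the finite
set S c of a finite type 's; actions are elements of a finite type 'a and the
admissible actions at state s of class c form A c s.
phi c s a s' is the probability phi^c(s' | s, a) of moving to s' from s under a.
Deterministic policies of class c are the extensional functions in
PiE (S c) (A c); a deterministic policy u is identified with the mixed policy
u(a|s) = (if u s = a then 1 else 0).
Points of X_{S x A} are vectors indexed by (class, state, action); coordinates
outside S c x A^c are 0.
\<close>

definition Aall :: "('c \<Rightarrow> 's set) \<Rightarrow> ('c \<Rightarrow> 's \<Rightarrow> 'a set) \<Rightarrow> 'c \<Rightarrow> 'a set" where
  "Aall S A c = (\<Union>s\<in>S c. A c s)"

definition UD :: "('c \<Rightarrow> 's set) \<Rightarrow> ('c \<Rightarrow> 's \<Rightarrow> 'a set) \<Rightarrow> 'c \<Rightarrow> ('s \<Rightarrow> 'a) set" where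
  "UD S A c = PiE (S c) (A c)"

definition pol :: "('s \<Rightarrow> 'a) \<Rightarrow> 'a \<Rightarrow> 's \<Rightarrow> real" where
  "pol u a s = (if u s = a then 1 else 0)"

text \<open>phiu ... c u s s' is phi^{c,u}_{s s'} = sum_{a'} phi^c(s | s', a') u(a' | s').\<close>
definition phiu :: "('c \<Rightarrow> 's set) \<Rightarrow> ('c \<Rightarrow> 's \<Rightarrow> 'a set) \<Rightarrow> ('c \<Rightarrow> 's \<Rightarrow> 'a \<Rightarrow> 's \<Rightarrow> real)
    \<Rightarrow> 'c \<Rightarrow> ('s \<Rightarrow> 'a) \<Rightarrow> 's \<Rightarrow> 's \<Rightarrow> real" where
  "phiu S A phi c u s s' = (\<Sum>a'\<in>A c s'. phi c s' a' s * pol u a' s')"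

definition trans_graph :: "('c \<Rightarrow> 's set) \<Rightarrow> ('c \<Rightarrow> 's \<Rightarrow> 'a set) \<Rightarrow> ('c \<Rightarrow> 's \<Rightarrow> 'a \<Rightarrow> 's \<Rightarrow> real)
    \<Rightarrow> 'c \<Rightarrow> ('s \<Rightarrow> 'a) \<Rightarrow> ('s \<times> 's) set" where
  "trans_graph S A phi c u = {(s', s). s' \<in> S c \<and> s \<in> S c \<and> phiu S A phi c u s s' > 0}"

text \<open>Recurrent communicating class of a finite chain: a nonempty set of states K
such that the set of states reachable from any x in K is exactly K
(i.e. a closed communicating class).\<close>
definition recurrent_class :: "('c \<Rightarrow> 's set) \<Rightarrow> ('c \<Rightarrow> 's \<Rightarrow> 'a set) \<Rightarrow> ('c \<Rightarrow> 's \<Rightarrow> 'a \<Rightarrow> 's \<Rightarrow> real)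
    \<Rightarrow> 'c \<Rightarrow> ('s \<Rightarrow> 'a) \<Rightarrow> 's set \<Rightarrow> bool" where
  "recurrent_class S A phi c u K \<longleftrightarrow> K \<subseteq> S c \<and> K \<noteq> {} \<and>
     (\<forall>x\<in>K. {y. (x, y) \<in> (trans_graph S A phi c u)\<^sup>*} = K)"

definition assumption_A2 :: "('c \<Rightarrow> 's set) \<Rightarrow> ('c \<Rightarrow> 's \<Rightarrow> 'a set) \<Rightarrow> ('c \<Rightarrow> 's \<Rightarrow> 'a \<Rightarrow> 's \<Rightarrow> real) \<Rightarrow> bool" where
  "assumption_A2 S A phi \<longleftrightarrow> (\<forall>c. \<forall>u\<in>UD S A c. \<exists>!K. recurrent_class S A phi c u K)"

text \<open>Stationary distribution (supported on S c) of the continuous-time chain with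
generator lam c * (phi^{c,u} - I), in the column convention of phi^{c,u}.\<close>
definition stationary :: "('c \<Rightarrow> 's set) \<Rightarrow> ('c \<Rightarrow> 's \<Rightarrow> 'a set) \<Rightarrow> ('c \<Rightarrow> 's \<Rightarrow> 'a \<Rightarrow> 's \<Rightarrow> real)
    \<Rightarrow> ('c \<Rightarrow> real) \<Rightarrow> 'c \<Rightarrow> ('s \<Rightarrow> 'a) \<Rightarrow> ('s \<Rightarrow> real) \<Rightarrow> bool" where
  "stationary S A phi lam c u \<eta> \<longleftrightarrow>
     (\<forall>s. s \<notin> S c \<longrightarrow> \<eta> s = 0) \<and> (\<forall>s\<in>S c. 0 \<le> \<eta> s) \<and> sum \<eta> (S c) = 1 \<and>
     (\<forall>s\<in>S c. (\<Sum>s'\<in>S c. lam c * (phiu S A phi c u s s' - (if s = s' then 1 else 0)) * \<eta> s') = 0)"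

definition eta :: "('c \<Rightarrow> 's set) \<Rightarrow> ('c \<Rightarrow> 's \<Rightarrow> 'a set) \<Rightarrow> ('c \<Rightarrow> 's \<Rightarrow> 'a \<Rightarrow> 's \<Rightarrow> real)
    \<Rightarrow> ('c \<Rightarrow> real) \<Rightarrow> 'c \<Rightarrow> ('s \<Rightarrow> 'a) \<Rightarrow> 's \<Rightarrow> real" where
  "eta S A phi lam c u = (THE \<eta>. stationary S A phi lam c u \<eta>)"

definition XSA :: "('c \<Rightarrow> 's set) \<Rightarrow> ('c \<Rightarrow> 's \<Rightarrow> 'a set) \<Rightarrow> ('c \<Rightarrow> real)
    \<Rightarrow> (real ^ ('c::finite \<times> 's::finite \<times> 'a::finite)) set" where
  "XSA S A m = {\<nu>. (\<forall>c s a. 0 \<le> \<nu> $ (c, s, a)) \<and>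
      (\<forall>c s a. \<not> (s \<in> S c \<and> a \<in> Aall S A c) \<longrightarrow> \<nu> $ (c, s, a) = 0) \<and>
      (\<forall>c. (\<Sum>s\<in>S c. \<Sum>a\<in>Aall S A c. \<nu> $ (c, s, a)) = m c)}"

definition nonneg_orthant :: "(real ^ 'i::finite) set" where
  "nonneg_orthant = {x. \<forall>i. 0 \<le> x $ i}"

text \<open>(A1): each r^c(s,a,.) extends to the nonnegative orthant, and the extension is
continuously differentiable on X_{S x A} (derivative taken within the orthant).\<close>
definition assumption_A1 :: "('c \<Rightarrow> 's set) \<Rightarrow> ('c \<Rightarrow> 's \<Rightarrow> 'a set) \<Rightarrow> ('c \<Rightarrow> real)
    \<Rightarrow> ('c \<Rightarrow> 's \<Rightarrow> 'a \<Rightarrow> real ^ ('c::finite \<times> 's::finite \<times> 'a::finite) \<Rightarrow> real) \<Rightarrow> bool" where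
  "assumption_A1 S A m r \<longleftrightarrow>
     (\<forall>c. \<forall>s\<in>S c. \<forall>a\<in>Aall S A c.
        \<exists>g g'. (\<forall>\<nu>\<in>XSA S A m. g \<nu> = r c s a \<nu>) \<and>
               (\<forall>\<nu>\<in>XSA S A m. (g has_derivative blinfun_apply (g' \<nu>)) (at \<nu> within nonneg_orthant)) \<and>
               continuous_on (XSA S A m) g')"

definition inX :: "('c \<Rightarrow> 's set) \<Rightarrow> ('c \<Rightarrow> 's \<Rightarrow> 'a set) \<Rightarrow> ('c \<Rightarrow> real)
    \<Rightarrow> ('c \<Rightarrow> 's \<Rightarrow> ('s \<Rightarrow> 'a) \<Rightarrow> real) \<Rightarrow> bool" where
  "inX S A m \<mu> \<longleftrightarrow> (\<forall>c. (\<forall>s\<in>S c. \<forall>u\<in>UD S A c. 0 \<le> \<mu> c s u) \<and>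
      (\<Sum>s\<in>S c. \<Sum>u\<in>UD S A c. \<mu> c s u) = m c)"

definition muSA :: "('c \<Rightarrow> 's set) \<Rightarrow> ('c \<Rightarrow> 's \<Rightarrow> 'a set)
    \<Rightarrow> ('c \<Rightarrow> 's \<Rightarrow> ('s \<Rightarrow> 'a) \<Rightarrow> real) \<Rightarrow> real ^ ('c::finite \<times> 's::finite \<times> 'a::finite)" where
  "muSA S A \<mu> = (\<chi> i. (case i of (c, s, a) \<Rightarrow>
      if s \<in> S c \<and> a \<in> Aall S A c then (\<Sum>u\<in>UD S A c. \<mu> c s u * pol u a s) else 0))"

definition Fval :: "('c \<Rightarrow> 's set) \<Rightarrow> ('c \<Rightarrow> 's \<Rightarrow> 'a set) \<Rightarrow> ('c \<Rightarrow> 's \<Rightarrow> 'a \<Rightarrow> 's \<Rightarrow> real)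
    \<Rightarrow> ('c \<Rightarrow> real) \<Rightarrow> ('c \<Rightarrow> 's \<Rightarrow> 'a \<Rightarrow> real ^ ('c::finite \<times> 's::finite \<times> 'a::finite) \<Rightarrow> real)
    \<Rightarrow> 'c \<Rightarrow> ('s \<Rightarrow> 'a) \<Rightarrow> ('c \<Rightarrow> 's \<Rightarrow> ('s \<Rightarrow> 'a) \<Rightarrow> real) \<Rightarrow> real" where
  "Fval S A phi lam r c u \<mu> =
     (\<Sum>s\<in>S c. \<Sum>a\<in>A c s. eta S A phi lam c u s * pol u a s * r c s a (muSA S A \<mu>))"

definition MSNE :: "('c \<Rightarrow> 's set) \<Rightarrow> ('c \<Rightarrow> 's \<Rightarrow> 'a set) \<Rightarrow> ('c \<Rightarrow> 's \<Rightarrow> 'a \<Rightarrow> 's \<Rightarrow> real)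
    \<Rightarrow> ('c \<Rightarrow> real) \<Rightarrow> ('c \<Rightarrow> real) \<Rightarrow> ('c \<Rightarrow> 's \<Rightarrow> 'a \<Rightarrow> real ^ ('c::finite \<times> 's::finite \<times> 'a::finite) \<Rightarrow> real)
    \<Rightarrow> ('c \<Rightarrow> 's \<Rightarrow> ('s \<Rightarrow> 'a) \<Rightarrow> real) \<Rightarrow> bool" where
  "MSNE S A phi lam m r \<mu> \<longleftrightarrow> inX S A m \<mu> \<and>
     (\<forall>c. \<forall>u\<in>UD S A c.
        ((\<Sum>s\<in>S c. \<mu> c s u) > 0 \<longrightarrow> (\<forall>v\<in>UD S A c. Fval S A phi lam r c u \<mu> \<ge> Fval S A phi lam r c v \<mu>)) \<and>
        (\<forall>s\<in>S c. \<mu> c s u = eta S A phi lam c u s * (\<Sum>s'\<in>S c. \<mu> c s' u)))"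

end

(*
  An MSNE is determined by the masses x(c,u) = mu^c[S^c,u] of the deterministic policies,
  because condition (ii) forces mu^c[s,u] = eta^{c,u}(s) x(c,u).  By (A2) each eta^{c,u} is
  well defined: the chain has a stationary distribution by Brouwer's theorem; every stationary
  distribution vanishes off the unique recurrent class (no mass can flow into a closed class from
  outside); and two of them, e1 and e2, coincide, because e1 - t e2 with t the largest factor
  keeping it nonnegative is an invariant measure vanishing at a point of the class, hence on all
  of it.  The masses x range over a product of scaled simplices, on which the payoffs F^c_u are
  continuous by (A1).  Nash's map x(c,u) |-> (x(c,u) + m^c g_u(x)) / (1 + sum_v g_v(x)), where
  g_u is the excess of F^c_u over the mean payoff of class c, has a Brouwer fixed point.  At a
  fixed point some used policy does not beat the mean, so its excess is 0, which forces every
  excess to vanish: each used policy is a best response.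
*)

theory Submission
  imports Defs
begin

section \<open>Products of scaled simplices\<close>

definition simplex_product :: "('c \<Rightarrow> 'u set) \<Rightarrow> ('c \<Rightarrow> real) \<Rightarrow> (real ^ ('c::finite \<times> 'u::finite)) set" where
  "simplex_product T M = {x. (\<forall>c u. 0 \<le> x $ (c, u)) \<and> (\<forall>c u. u \<notin> T c \<longrightarrow> x $ (c, u) = 0) \<and>
      (\<forall>c. (\<Sum>u\<in>T c. x $ (c, u)) = M c)}"

lemma simplex_product_le:
  assumes "x \<in> simplex_product T M"
  shows "x $ (c, u) \<le> M c"
proof (cases "u \<in> T c")
  case True
  then show ?thesis
    using assms member_le_sum[of u "T c" "\<lambda>v. x $ (c, v)"] by (auto simp: simplex_product_def)
next
  case False
  then show ?thesis
    using assms sum_nonneg[of "T c" "\<lambda>v. x $ (c, v)"] by (auto simp: simplex_product_def)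
qed

lemma compact_simplex_product: "compact (simplex_product T M)"
proof -
  have "simplex_product T M \<subseteq> cbox 0 (\<chi> i. M (fst i))"
    by (auto simp: mem_box_cart simplex_product_def simplex_product_le)
  then have "bounded (simplex_product T M)"
    by (rule bounded_subset[OF bounded_cbox])
  moreover have "closed (simplex_product T M)"
    unfolding simplex_product_def
    by (intro closed_Collect_conj closed_Collect_all closed_Collect_imp closed_Collect_le
          closed_Collect_eq open_Collect_const continuous_intros)
  ultimately show ?thesis
    by (simp add: compact_eq_bounded_closed)
qed

lemma convex_simplex_product: "convex (simplex_product T M)"
  unfolding convex_def simplex_product_def
  by (auto simp: sum.distrib simp flip: sum_distrib_left distrib_right)

lemma simplex_product_nonempty:
  assumes "\<And>c. T c \<noteq> {}" and "\<And>c. 0 \<le> M c"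
  shows "simplex_product T M \<noteq> {}"
proof -
  have "(\<chi> i. if snd i \<in> T (fst i) then M (fst i) / card (T (fst i)) else 0) \<in> simplex_product T M"
    using assms by (auto simp: simplex_product_def)
  then show ?thesis by blast
qed

lemma simplex_product_fixpoint:
  assumes "\<And>c. T c \<noteq> {}" and "\<And>c. 0 \<le> M c"
    and "continuous_on (simplex_product T M) f" and "f \<in> simplex_product T M \<rightarrow> simplex_product T M"
  obtains x where "x \<in> simplex_product T M" and "f x = x"
  using brouwer[OF compact_simplex_product convex_simplex_product simplex_product_nonempty] assms
  by blast

section \<open>Stationary distributions of finite Markov chains\<close>

(* P y x is the probability of a step from x to y, the column convention of phiu. *)
locale column_stochastic =
  fixes S :: "'s::finite set" and P :: "'s \<Rightarrow> 's \<Rightarrow> real"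
  assumes nonneg: "x \<in> S \<Longrightarrow> y \<in> S \<Longrightarrow> 0 \<le> P y x"
    and column_sum: "x \<in> S \<Longrightarrow> (\<Sum>y\<in>S. P y x) = 1"
begin

definition step_graph :: "('s \<times> 's) set" where
  "step_graph = {(x, y). x \<in> S \<and> y \<in> S \<and> 0 < P y x}"

definition closed_class :: "'s set \<Rightarrow> bool" where
  "closed_class K \<longleftrightarrow> K \<subseteq> S \<and> K \<noteq> {} \<and> (\<forall>x\<in>K. {y. (x, y) \<in> step_graph\<^sup>*} = K)"

definition invariant_measure :: "('s \<Rightarrow> real) \<Rightarrow> bool" where
  "invariant_measure w \<longleftrightarrow> (\<forall>s\<in>S. 0 \<le> w s) \<and> (\<forall>s\<in>S. (\<Sum>s'\<in>S. P s s' * w s') = w s)"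

definition stationary_dist :: "('s \<Rightarrow> real) \<Rightarrow> bool" where
  "stationary_dist e \<longleftrightarrow> invariant_measure e \<and> sum e S = 1 \<and> (\<forall>s. s \<notin> S \<longrightarrow> e s = 0)"

lemma reachable_in_S: "(x, y) \<in> step_graph\<^sup>* \<Longrightarrow> x \<in> S \<Longrightarrow> y \<in> S"
  by (induction rule: rtrancl_induct) (auto simp: step_graph_def)

lemma invariant_measure_pos_reachable:
  assumes w: "invariant_measure w" and "(x, y) \<in> step_graph\<^sup>*" and "0 < w x"
  shows "0 < w y"
  using assms(2)
proof (induction rule: rtrancl_induct)
  case base
  show ?case using \<open>0 < w x\<close> .
next
  case (step y z)
  then have "y \<in> S" "z \<in> S" "0 < P z y"
    by (auto simp: step_graph_def)
  have "P z y * w y \<le> (\<Sum>s'\<in>S. P z s' * w s')"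
    using w \<open>y \<in> S\<close> \<open>z \<in> S\<close> by (intro member_le_sum) (auto simp: invariant_measure_def nonneg)
  also have "\<dots> = w z"
    using w \<open>z \<in> S\<close> by (simp add: invariant_measure_def)
  finally show ?case
    using mult_pos_pos[OF \<open>0 < P z y\<close> step.IH] by linarith
qed

lemma invariant_measure_vanishes_on_class:
  assumes w: "invariant_measure w" and K: "closed_class K"
    and "y \<in> K" and "w y = 0" and "x \<in> K"
  shows "w x = 0"
proof (rule ccontr)
  assume "w x \<noteq> 0"
  moreover have "0 \<le> w x"
    using w K \<open>x \<in> K\<close> by (auto simp: invariant_measure_def closed_class_def)
  ultimately have "0 < w x"
    by simp
  moreover have "(x, y) \<in> step_graph\<^sup>*"
    using K \<open>x \<in> K\<close> \<open>y \<in> K\<close> by (auto simp: closed_class_def)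
  ultimately have "0 < w y"
    using invariant_measure_pos_reachable[OF w] by blast
  with \<open>w y = 0\<close> show False
    by simp
qed

lemma invariant_measure_diff:
  assumes "invariant_measure v" and "invariant_measure w" and "\<forall>s\<in>S. t * w s \<le> v s"
  shows "invariant_measure (\<lambda>s. v s - t * w s)"
proof -
  have "(\<Sum>s'\<in>S. P s s' * (v s' - t * w s')) = (\<Sum>s'\<in>S. P s s' * v s') - t * (\<Sum>s'\<in>S. P s s' * w s')" for s
    by (simp add: right_diff_distrib sum_subtractf sum_distrib_left mult.left_commute)
  with assms show ?thesis
    by (simp add: invariant_measure_def)
qed

lemma closed_class_reachable:
  assumes "x \<in> S"
  shows "\<exists>K. closed_class K \<and> K \<subseteq> {y. (x, y) \<in> step_graph\<^sup>*}"
  using assms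
proof (induction "card {y. (x, y) \<in> step_graph\<^sup>*}" arbitrary: x rule: less_induct)
  case less
  define R where "R z = {y. (z, y) \<in> step_graph\<^sup>*}" for z
  show ?case
  proof (cases "\<forall>z\<in>R x. R z = R x")
    case True
    have "R x \<subseteq> S" and "x \<in> R x"
      using reachable_in_S less.prems by (auto simp: R_def)
    with True show ?thesis
      unfolding closed_class_def R_def by blast
  next
    case False
    then obtain z where z: "z \<in> R x" "R z \<noteq> R x"
      by auto
    have "R z \<subseteq> R x"
      using z(1) by (auto simp: R_def)
    with z(2) have "card (R z) < card (R x)"
      by (intro psubset_card_mono) auto
    moreover have "z \<in> S"
      using z(1) reachable_in_S less.prems by (auto simp: R_def)
    ultimately obtain K where "closed_class K" "K \<subseteq> R z"
      using less.hyps unfolding R_def by blast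
    with \<open>R z \<subseteq> R x\<close> show ?thesis
      unfolding R_def by blast
  qed
qed

lemma closed_class_column_sum:
  assumes K: "closed_class K" and "x \<in> K"
  shows "(\<Sum>y\<in>K. P y x) = 1"
proof -
  have "P y x = 0" if "y \<in> S - K" for y
  proof -
    have "(x, y) \<notin> step_graph"
      using K \<open>x \<in> K\<close> that by (auto simp: closed_class_def)
    with that \<open>x \<in> K\<close> K nonneg show ?thesis
      by (force simp: step_graph_def closed_class_def)
  qed
  then have "(\<Sum>y\<in>S. P y x) = (\<Sum>y\<in>K. P y x)"
    using K by (intro sum.mono_neutral_right) (auto simp: closed_class_def)
  with column_sum[of x] K \<open>x \<in> K\<close> show ?thesis
    by (auto simp: closed_class_def)
qed

lemma stationary_dist_exists:
  assumes "S \<noteq> {}"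
  shows "\<exists>e. stationary_dist e"
proof -
  \<comment> \<open>the probability simplex on S, as a simplex product with a single block\<close>
  let ?\<Delta> = "simplex_product (\<lambda>_::unit. S) (\<lambda>_. 1)"
  define f :: "real ^ (unit \<times> 's) \<Rightarrow> real ^ (unit \<times> 's)" where
    "f x = (\<chi> i. if snd i \<in> S then (\<Sum>s'\<in>S. P (snd i) s' * x $ ((), s')) else 0)" for x
  have "continuous_on ?\<Delta> (\<lambda>x. f x $ i)" for i
    unfolding f_def
    by (cases "snd i \<in> S")
      (simp_all, intro continuous_on_sum continuous_on_mult continuous_on_const
        continuous_on_id[THEN continuous_on_component])
  then have "continuous_on ?\<Delta> f"
    using continuous_on_vec_lambda[of ?\<Delta> "\<lambda>i x. f x $ i"] by simp
  moreover have "f \<in> ?\<Delta> \<rightarrow> ?\<Delta>"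
  proof
    fix x
    assume x: "x \<in> ?\<Delta>"
    have "(\<Sum>s\<in>S. \<Sum>s'\<in>S. P s s' * x $ ((), s')) = (\<Sum>s'\<in>S. (\<Sum>s\<in>S. P s s') * x $ ((), s'))"
      by (subst sum.swap) (simp add: sum_distrib_right)
    also have "\<dots> = 1"
      using x by (simp add: column_sum simplex_product_def)
    finally show "f x \<in> ?\<Delta>"
      using x by (auto simp: f_def simplex_product_def nonneg intro!: sum_nonneg)
  qed
  ultimately obtain x where x: "x \<in> ?\<Delta>" and "f x = x"
    using simplex_product_fixpoint[of "\<lambda>_. S" "\<lambda>_. 1"] assms by auto
  have "(\<Sum>s'\<in>S. P s s' * x $ ((), s')) = x $ ((), s)" if "s \<in> S" for s
  proof -
    have "f x $ ((), s) = x $ ((), s)"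
      using \<open>f x = x\<close> by simp
    with that show ?thesis
      by (simp add: f_def)
  qed
  with x have "stationary_dist (\<lambda>s. x $ ((), s))"
    by (simp add: stationary_dist_def invariant_measure_def simplex_product_def)
  then show ?thesis
    by blast
qed

lemma stationary_dist_no_inflow:
  assumes e: "stationary_dist e" and K: "closed_class K" and "x \<in> S - K" and "y \<in> K"
  shows "e x * P y x = 0"
proof -
  let ?Q = "\<lambda>x. \<Sum>y\<in>K. P y x"
  have "K \<subseteq> S"
    using K by (simp add: closed_class_def)
  have e_nonneg: "\<forall>s\<in>S. 0 \<le> e s"
    using e by (simp add: stationary_dist_def invariant_measure_def)
  have Q_nonneg: "\<forall>s\<in>S. 0 \<le> ?Q s"
    using \<open>K \<subseteq> S\<close> by (auto intro!: sum_nonneg nonneg)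
  have "(\<Sum>y\<in>K. e y) = (\<Sum>y\<in>K. \<Sum>x\<in>S. P y x * e x)"
    using e \<open>K \<subseteq> S\<close> by (intro sum.cong) (auto simp: stationary_dist_def invariant_measure_def)
  also have "\<dots> = (\<Sum>x\<in>S. e x * ?Q x)"
    by (subst sum.swap) (simp add: sum_distrib_left mult.commute)
  also have "\<dots> = (\<Sum>x\<in>K. e x * ?Q x) + (\<Sum>x\<in>S - K. e x * ?Q x)"
    using \<open>K \<subseteq> S\<close> by (simp add: sum.subset_diff)
  also have "(\<Sum>x\<in>K. e x * ?Q x) = (\<Sum>y\<in>K. e y)"
    using K by (simp add: closed_class_column_sum)
  finally have "(\<Sum>x\<in>S - K. e x * ?Q x) = 0"
    by simp
  then have "e x * ?Q x = 0"
    using \<open>x \<in> S - K\<close> e_nonneg Q_nonneg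
    by (intro sum_nonneg_0[of "S - K" "\<lambda>x. e x * ?Q x"]) auto
  moreover have "0 \<le> e x * P y x"
    using \<open>x \<in> S - K\<close> \<open>y \<in> K\<close> \<open>K \<subseteq> S\<close> e_nonneg by (auto intro!: mult_nonneg_nonneg nonneg)
  moreover have "e x * P y x \<le> e x * ?Q x"
    using \<open>x \<in> S - K\<close> \<open>y \<in> K\<close> \<open>K \<subseteq> S\<close> e_nonneg by (auto intro!: mult_left_mono member_le_sum nonneg)
  ultimately show ?thesis
    by linarith
qed

lemma stationary_dist_supported_on_class:
  assumes e: "stationary_dist e" and K: "closed_class K"
    and reach: "\<forall>x\<in>S. \<exists>z\<in>K. (x, z) \<in> step_graph\<^sup>*" and "x \<notin> K"
  shows "e x = 0"
proof (cases "x \<in> S")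
  case True
  have "x \<in> K" if "(x, z) \<in> step_graph\<^sup>*" "z \<in> K" "0 < e x" for x z
    using that
  proof (induction rule: converse_rtrancl_induct)
    case (step x y)
    then have "y \<in> K"
      using invariant_measure_pos_reachable e by (auto simp: stationary_dist_def)
    show "x \<in> K"
    proof (rule ccontr)
      assume "x \<notin> K"
      with step.hyps(1) have "x \<in> S - K"
        by (simp add: step_graph_def)
      then have "e x * P y x = 0"
        using stationary_dist_no_inflow[OF e K _ \<open>y \<in> K\<close>] by blast
      with step.hyps(1) step.prems show False
        by (auto simp: step_graph_def)
    qed
  qed
  with True reach \<open>x \<notin> K\<close> have "\<not> 0 < e x"
    by blast
  with True e show ?thesis
    by (auto simp: stationary_dist_def invariant_measure_def)
qed (use e in \<open>simp add: stationary_dist_def\<close>)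

lemma stationary_dist_pos_on_class:
  assumes e: "stationary_dist e" and K: "closed_class K"
    and reach: "\<forall>x\<in>S. \<exists>z\<in>K. (x, z) \<in> step_graph\<^sup>*" and "y \<in> K"
  shows "0 < e y"
proof (rule ccontr)
  assume "\<not> 0 < e y"
  moreover have "0 \<le> e y"
    using e K \<open>y \<in> K\<close> by (auto simp: stationary_dist_def invariant_measure_def closed_class_def)
  ultimately have "e y = 0"
    by simp
  then have "e x = 0" for x
    using invariant_measure_vanishes_on_class[of e K y x] stationary_dist_supported_on_class[OF e K reach, of x]
      e K \<open>y \<in> K\<close> by (cases "x \<in> K") (auto simp: stationary_dist_def)
  with e show False
    by (simp add: stationary_dist_def)
qed

lemma stationary_dist_unique:
  assumes K: "closed_class K" and reach: "\<forall>x\<in>S. \<exists>z\<in>K. (x, z) \<in> step_graph\<^sup>*"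
    and e1: "stationary_dist e1" and e2: "stationary_dist e2"
  shows "e1 = e2"
proof -
  have "finite K" "K \<noteq> {}"
    using K by (auto simp: closed_class_def)
  obtain y0 where "y0 \<in> K" and y0_min: "\<forall>y\<in>K. e1 y0 / e2 y0 \<le> e1 y / e2 y"
    using arg_min_if_finite[OF \<open>finite K\<close> \<open>K \<noteq> {}\<close>, of "\<lambda>y. e1 y / e2 y"] by (meson not_le)
  define t where "t = e1 y0 / e2 y0"
  define w where "w s = e1 s - t * e2 s" for s
  have pos2: "0 < e2 y" if "y \<in> K" for y
    using stationary_dist_pos_on_class[OF e2 K reach that] .
  have off_K: "e1 s = 0 \<and> e2 s = 0" if "s \<notin> K" for s
    using stationary_dist_supported_on_class[OF _ K reach that] e1 e2 by blast
  have "\<forall>s\<in>S. t * e2 s \<le> e1 s"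
  proof
    fix s
    assume "s \<in> S"
    show "t * e2 s \<le> e1 s"
    proof (cases "s \<in> K")
      case True
      then have "t * e2 s \<le> e1 s / e2 s * e2 s"
        using y0_min pos2 by (intro mult_right_mono) (auto simp: t_def less_imp_le)
      with True pos2 show ?thesis
        by (simp add: order_less_imp_not_eq2)
    qed (simp add: off_K)
  qed
  then have w_invariant: "invariant_measure w"
    unfolding w_def using e1 e2 by (intro invariant_measure_diff) (auto simp: stationary_dist_def)
  moreover have "w y0 = 0"
    using pos2[OF \<open>y0 \<in> K\<close>] by (simp add: w_def t_def)
  ultimately have "w s = 0" for s
    using invariant_measure_vanishes_on_class[OF w_invariant K \<open>y0 \<in> K\<close>] off_K[of s]
    by (cases "s \<in> K") (simp_all add: w_def)
  then have proportional: "e1 = (\<lambda>s. t * e2 s)"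
    by (auto simp: w_def fun_eq_iff)
  then have "t = 1"
    using e1 e2 by (simp add: stationary_dist_def flip: sum_distrib_left)
  with proportional show ?thesis
    by simp
qed

lemma ex1_stationary_dist:
  assumes "\<exists>!K. closed_class K"
  shows "\<exists>!e. stationary_dist e"
proof -
  obtain K where K: "closed_class K" and K_unique: "\<And>K'. closed_class K' \<Longrightarrow> K' = K"
    using assms by blast
  have reach: "\<forall>x\<in>S. \<exists>z\<in>K. (x, z) \<in> step_graph\<^sup>*"
  proof
    fix x
    assume "x \<in> S"
    then obtain K' where "closed_class K'" and "K' \<subseteq> {y. (x, y) \<in> step_graph\<^sup>*}"
      using closed_class_reachable by blast
    moreover have "K \<noteq> {}"
      using K by (simp add: closed_class_def)
    ultimately show "\<exists>z\<in>K. (x, z) \<in> step_graph\<^sup>*"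
      using K_unique by blast
  qed
  have "S \<noteq> {}"
    using K by (auto simp: closed_class_def)
  then show ?thesis
    using stationary_dist_exists stationary_dist_unique[OF K reach] by blast
qed

end

section \<open>Nash equilibria of population games\<close>

lemma weighted_mean_witness_le:
  fixes p f :: "'u \<Rightarrow> real"
  assumes "finite T" and "\<forall>w\<in>T. 0 \<le> p w" and "(\<Sum>w\<in>T. p w * (f w - a)) = 0"
    and "u \<in> T" and "0 < p u"
  obtains w where "w \<in> T" and "0 < p w" and "f w \<le> a"
proof (rule ccontr)
  assume "\<not> thesis"
  with that have above: "\<forall>w\<in>T. 0 < p w \<longrightarrow> a < f w" by force
  have "0 < (\<Sum>w\<in>T. p w * (f w - a))"
  proof (rule sum_pos2[OF \<open>finite T\<close> \<open>u \<in> T\<close>])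
    show "0 < p u * (f u - a)"
      using above assms(4,5) by simp
    show "0 \<le> p w * (f w - a)" if "w \<in> T" for w
      using above assms(2) that by (cases "p w = 0") (auto simp: order_le_less)
  qed
  with assms(3) show False by simp
qed

lemma weighted_mean_eq_if_le:
  fixes p f :: "'u \<Rightarrow> real"
  assumes "finite T" and "\<forall>w\<in>T. 0 \<le> p w" and "(\<Sum>w\<in>T. p w * (f w - a)) = 0"
    and "\<forall>w\<in>T. f w \<le> a" and "u \<in> T" and "0 < p u"
  shows "f u = a"
proof -
  have "(\<Sum>w\<in>T. p w * (a - f w)) = - (\<Sum>w\<in>T. p w * (f w - a))"
    unfolding sum_negf[symmetric] by (intro sum.cong) (simp_all add: algebra_simps)
  then have "(\<Sum>w\<in>T. p w * (a - f w)) = 0"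
    using assms(3) by simp
  moreover have "\<forall>w\<in>T. 0 \<le> p w * (a - f w)"
    using assms(2,4) by simp
  ultimately have "p u * (a - f u) = 0"
    using \<open>u \<in> T\<close> by (intro sum_nonneg_0[OF \<open>finite T\<close>, of "\<lambda>w. p w * (a - f w)"]) auto
  with \<open>0 < p u\<close> show ?thesis by simp
qed

definition nash_equilibrium :: "('c \<Rightarrow> 'u set) \<Rightarrow> ('c \<Rightarrow> 'u \<Rightarrow> real ^ ('c::finite \<times> 'u::finite) \<Rightarrow> real)
    \<Rightarrow> real ^ ('c \<times> 'u) \<Rightarrow> bool" where
  "nash_equilibrium T F x \<longleftrightarrow> (\<forall>c. \<forall>u\<in>T c. 0 < x $ (c, u) \<longrightarrow> (\<forall>v\<in>T c. F c v x \<le> F c u x))"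

definition mean_payoff :: "('c \<Rightarrow> 'u set) \<Rightarrow> ('c \<Rightarrow> real) \<Rightarrow> ('c \<Rightarrow> 'u \<Rightarrow> real ^ ('c::finite \<times> 'u::finite) \<Rightarrow> real)
    \<Rightarrow> 'c \<Rightarrow> real ^ ('c \<times> 'u) \<Rightarrow> real" where
  "mean_payoff T M F c x = (\<Sum>u\<in>T c. x $ (c, u) * F c u x) / M c"

definition excess_payoff :: "('c \<Rightarrow> 'u set) \<Rightarrow> ('c \<Rightarrow> real) \<Rightarrow> ('c \<Rightarrow> 'u \<Rightarrow> real ^ ('c::finite \<times> 'u::finite) \<Rightarrow> real)
    \<Rightarrow> 'c \<Rightarrow> 'u \<Rightarrow> real ^ ('c \<times> 'u) \<Rightarrow> real" where
  "excess_payoff T M F c u x = max 0 (F c u x - mean_payoff T M F c x)"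

definition nash_map :: "('c \<Rightarrow> 'u set) \<Rightarrow> ('c \<Rightarrow> real) \<Rightarrow> ('c \<Rightarrow> 'u \<Rightarrow> real ^ ('c::finite \<times> 'u::finite) \<Rightarrow> real)
    \<Rightarrow> real ^ ('c \<times> 'u) \<Rightarrow> real ^ ('c \<times> 'u)" where
  "nash_map T M F x = (\<chi> i. case i of (c, u) \<Rightarrow>
     if u \<in> T c then (x $ (c, u) + M c * excess_payoff T M F c u x) / (1 + (\<Sum>v\<in>T c. excess_payoff T M F c v x))
     else 0)"

lemma excess_payoff_nonneg: "0 \<le> excess_payoff T M F c u x"
  by (simp add: excess_payoff_def)

lemma nash_map_denominator_pos: "0 < 1 + (\<Sum>v\<in>T c. excess_payoff T M F c v x)"
  by (intro add_pos_nonneg sum_nonneg excess_payoff_nonneg) simp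

lemma nash_map_component:
  "nash_map T M F x $ (c, u) =
     (if u \<in> T c then (x $ (c, u) + M c * excess_payoff T M F c u x) / (1 + (\<Sum>v\<in>T c. excess_payoff T M F c v x))
      else 0)"
  by (simp add: nash_map_def)

lemma nash_map_in_simplex_product:
  assumes "\<And>c. 0 \<le> M c" and x: "x \<in> simplex_product T M"
  shows "nash_map T M F x \<in> simplex_product T M"
  unfolding simplex_product_def
proof (intro CollectI conjI allI impI)
  fix c u
  show "0 \<le> nash_map T M F x $ (c, u)"
    using assms nash_map_denominator_pos[of T M F c x]
    by (auto simp: nash_map_component simplex_product_def excess_payoff_nonneg)
  show "u \<notin> T c \<Longrightarrow> nash_map T M F x $ (c, u) = 0"
    by (simp add: nash_map_component)
next
  fix c
  let ?E = "\<lambda>v. excess_payoff T M F c v x"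
  have "(\<Sum>u\<in>T c. nash_map T M F x $ (c, u)) = (\<Sum>u\<in>T c. x $ (c, u) + M c * ?E u) / (1 + sum ?E (T c))"
    by (simp add: nash_map_component sum_divide_distrib)
  also have "(\<Sum>u\<in>T c. x $ (c, u) + M c * ?E u) = M c * (1 + sum ?E (T c))"
    using x by (simp add: simplex_product_def sum.distrib sum_distrib_left distrib_left)
  finally show "(\<Sum>u\<in>T c. nash_map T M F x $ (c, u)) = M c"
    using nash_map_denominator_pos[of T M F c x] by simp
qed

lemma continuous_on_nash_map:
  assumes "\<And>c. M c \<noteq> 0" and "\<And>c u. u \<in> T c \<Longrightarrow> continuous_on D (F c u)"
  shows "continuous_on D (nash_map T M F)"
proof -
  have excess: "continuous_on D (excess_payoff T M F c u)" if "u \<in> T c" for c u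
    using assms that unfolding excess_payoff_def mean_payoff_def
    by (intro continuous_intros) auto
  have "continuous_on D (\<lambda>x. nash_map T M F x $ (c, u))" for c u
  proof (cases "u \<in> T c")
    case True
    show ?thesis
      unfolding nash_map_component using True
      by (simp, intro continuous_on_divide continuous_on_add continuous_on_mult continuous_on_sum
          continuous_on_const continuous_on_id[THEN continuous_on_component] excess)
        (simp_all add: order_less_imp_not_eq2[OF nash_map_denominator_pos])
  qed (simp add: nash_map_component)
  then have "continuous_on D (\<lambda>x. nash_map T M F x $ i)" for i
    by (metis surjective_pairing)
  then show ?thesis
    using continuous_on_vec_lambda[of D "\<lambda>i x. nash_map T M F x $ i"] by simp
qed

lemma nash_map_fixpoint_imp_equilibrium:
  assumes M: "\<And>c. 0 < M c" and x: "x \<in> simplex_product T M" and fixpoint: "nash_map T M F x = x"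
  shows "nash_equilibrium T F x"
  unfolding nash_equilibrium_def
proof (intro allI ballI impI)
  fix c u v
  assume u: "u \<in> T c" "0 < x $ (c, u)" and v: "v \<in> T c"
  let ?E = "\<lambda>w. excess_payoff T M F c w x" and ?mean = "mean_payoff T M F c x"
  have x_nonneg: "\<forall>w\<in>T c. 0 \<le> x $ (c, w)" and x_sum: "(\<Sum>w\<in>T c. x $ (c, w)) = M c"
    using x by (auto simp: simplex_product_def)
  have "(\<Sum>w\<in>T c. x $ (c, w) * (F c w x - ?mean))
          = (\<Sum>w\<in>T c. x $ (c, w) * F c w x) - (\<Sum>w\<in>T c. x $ (c, w)) * ?mean"
    by (simp add: right_diff_distrib sum_subtractf sum_distrib_right)
  also have "\<dots> = 0"
    using x_sum M[of c] by (simp add: mean_payoff_def)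
  finally have balance: "(\<Sum>w\<in>T c. x $ (c, w) * (F c w x - ?mean)) = 0" .
  have fixed: "x $ (c, w) * sum ?E (T c) = M c * ?E w" if "w \<in> T c" for w
  proof -
    have "x $ (c, w) = (x $ (c, w) + M c * ?E w) / (1 + sum ?E (T c))"
      using arg_cong[OF fixpoint, of "\<lambda>y. y $ (c, w)"] that by (simp add: nash_map_component)
    then show ?thesis
      using nash_map_denominator_pos[of T M F c x] by (simp add: field_simps)
  qed
  obtain w where w: "w \<in> T c" "0 < x $ (c, w)" "F c w x \<le> ?mean"
    using weighted_mean_witness_le[OF _ x_nonneg balance u] by auto
  then have "?E w = 0"
    by (simp add: excess_payoff_def)
  with fixed[OF w(1)] w(2) have "sum ?E (T c) = 0"
    by simp
  then have "\<forall>w\<in>T c. ?E w = 0"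
    by (simp add: sum_nonneg_eq_0_iff excess_payoff_nonneg)
  then have below: "\<forall>w\<in>T c. F c w x \<le> ?mean"
    unfolding excess_payoff_def by (metis max.cobounded2 diff_le_0_iff_le)
  have "F c u x = ?mean"
    using weighted_mean_eq_if_le[OF _ x_nonneg balance below u] by simp
  with below v show "F c v x \<le> F c u x"
    by simp
qed

lemma nash_equilibrium_exists:
  assumes "\<And>c. T c \<noteq> {}" and M: "\<And>c. 0 < M c"
    and "\<And>c u. u \<in> T c \<Longrightarrow> continuous_on (simplex_product T M) (F c u)"
  obtains x where "x \<in> simplex_product T M" and "nash_equilibrium T F x"
proof -
  have "continuous_on (simplex_product T M) (nash_map T M F)"
    using assms by (intro continuous_on_nash_map) (auto simp: order_less_imp_not_eq2)
  moreover have "nash_map T M F \<in> simplex_product T M \<rightarrow> simplex_product T M"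
    using M by (auto intro: nash_map_in_simplex_product less_imp_le)
  ultimately obtain x where "x \<in> simplex_product T M" and "nash_map T M F x = x"
    using simplex_product_fixpoint[of T M] assms(1) M by (metis less_imp_le)
  with M show thesis
    using that nash_map_fixpoint_imp_equilibrium by blast
qed

section \<open>Stationary populations of the mean field game\<close>

lemma phiu_deterministic:
  fixes A :: "'c \<Rightarrow> 's \<Rightarrow> 'a::finite set"
  assumes "u \<in> UD S A c" and "s' \<in> S c"
  shows "phiu S A phi c u s s' = phi c s' (u s') s"
proof -
  have "u s' \<in> A c s'"
    using assms by (auto simp: UD_def)
  then show ?thesis
    by (simp add: phiu_def pol_def if_distrib[of "\<lambda>z. _ * z"] cong: if_cong)
qed

lemma sum_pol_Aall:
  fixes A :: "'c \<Rightarrow> 's \<Rightarrow> 'a::finite set"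
  assumes "u \<in> UD S A c" and "s \<in> S c"
  shows "(\<Sum>a\<in>Aall S A c. pol u a s) = 1"
proof -
  have "u s \<in> Aall S A c"
    using assms by (auto simp: UD_def Aall_def)
  then show ?thesis
    by (simp add: pol_def)
qed

lemma muSA_in_XSA:
  fixes A :: "'c::finite \<Rightarrow> 's::finite \<Rightarrow> 'a::finite set"
  assumes \<mu>: "inX S A m \<mu>"
  shows "muSA S A \<mu> \<in> XSA S A m"
  unfolding XSA_def
proof (intro CollectI conjI allI impI)
  fix c s a
  show "0 \<le> muSA S A \<mu> $ (c, s, a)"
    using \<mu> by (auto simp: muSA_def inX_def pol_def intro!: sum_nonneg)
  show "\<not> (s \<in> S c \<and> a \<in> Aall S A c) \<Longrightarrow> muSA S A \<mu> $ (c, s, a) = 0"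
    by (auto simp: muSA_def)
next
  fix c
  have "(\<Sum>s\<in>S c. \<Sum>a\<in>Aall S A c. muSA S A \<mu> $ (c, s, a))
          = (\<Sum>s\<in>S c. \<Sum>u\<in>UD S A c. \<mu> c s u * (\<Sum>a\<in>Aall S A c. pol u a s))"
    by (intro sum.cong refl) (simp add: muSA_def sum_distrib_left sum.swap[of _ "Aall S A c"])
  also have "\<dots> = (\<Sum>s\<in>S c. \<Sum>u\<in>UD S A c. \<mu> c s u)"
    by (intro sum.cong refl) (simp add: sum_pol_Aall)
  finally show "(\<Sum>s\<in>S c. \<Sum>a\<in>Aall S A c. muSA S A \<mu> $ (c, s, a)) = m c"
    using \<mu> by (simp add: inX_def)
qed

lemma continuous_on_muSA:
  assumes "\<And>c s u. continuous_on D (\<lambda>x. \<mu> x c s u)"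
  shows "continuous_on D (\<lambda>x. muSA S A (\<mu> x))"
proof -
  have "continuous_on D (\<lambda>x. muSA S A (\<mu> x) $ (c, s, a))" for c s a
  proof (cases "s \<in> S c \<and> a \<in> Aall S A c")
    case True
    then show ?thesis
      by (simp add: muSA_def, intro continuous_on_sum continuous_on_mult_right assms)
  next
    case False
    then have "(\<lambda>x. muSA S A (\<mu> x) $ (c, s, a)) = (\<lambda>x. 0)"
      by (auto simp: muSA_def)
    then show ?thesis
      by (simp only: continuous_on_const)
  qed
  then have "continuous_on D (\<lambda>x. muSA S A (\<mu> x) $ i)" for i
    by (metis prod.exhaust)
  then show ?thesis
    using continuous_on_vec_lambda[of D "\<lambda>i x. muSA S A (\<mu> x) $ i"] by simp
qed

lemma continuous_on_reward:
  assumes "assumption_A1 S A m r" and "s \<in> S c" and "a \<in> Aall S A c"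
  shows "continuous_on (XSA S A m) (r c s a)"
proof -
  obtain g g' where g: "\<forall>\<nu>\<in>XSA S A m. g \<nu> = r c s a \<nu>"
    and g_deriv: "\<forall>\<nu>\<in>XSA S A m. (g has_derivative blinfun_apply (g' \<nu>)) (at \<nu> within nonneg_orthant)"
    using assms unfolding assumption_A1_def by blast
  have "XSA S A m \<subseteq> nonneg_orthant"
    by (auto simp: XSA_def nonneg_orthant_def)
  then have "continuous_on (XSA S A m) g"
    using g_deriv has_derivative_continuous continuous_within_subset
    unfolding continuous_on_eq_continuous_within by blast
  then show ?thesis
    using continuous_on_cong[OF refl, of "XSA S A m" g "r c s a"] g by blast
qed

definition stationary_population :: "('c \<Rightarrow> 's set) \<Rightarrow> ('c \<Rightarrow> 's \<Rightarrow> 'a set) \<Rightarrow> ('c \<Rightarrow> 's \<Rightarrow> 'a \<Rightarrow> 's \<Rightarrow> real)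
    \<Rightarrow> ('c \<Rightarrow> real) \<Rightarrow> real ^ ('c::finite \<times> ('s::finite \<Rightarrow> 'a::finite)) \<Rightarrow> 'c \<Rightarrow> 's \<Rightarrow> ('s \<Rightarrow> 'a) \<Rightarrow> real" where
  "stationary_population S A phi lam x c s u = eta S A phi lam c u s * x $ (c, u)"

locale mean_field_dynamics =
  fixes S :: "'c::finite \<Rightarrow> 's::finite set" and A :: "'c \<Rightarrow> 's \<Rightarrow> 'a::finite set"
    and phi :: "'c \<Rightarrow> 's \<Rightarrow> 'a \<Rightarrow> 's \<Rightarrow> real" and lam :: "'c \<Rightarrow> real"
  assumes rate_pos: "0 < lam c"
    and kernel_nonneg: "s \<in> S c \<Longrightarrow> a \<in> A c s \<Longrightarrow> s' \<in> S c \<Longrightarrow> 0 \<le> phi c s a s'"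
    and kernel_sum: "s \<in> S c \<Longrightarrow> a \<in> A c s \<Longrightarrow> (\<Sum>s'\<in>S c. phi c s a s') = 1"
    and A2: "assumption_A2 S A phi"
begin

lemma column_stochastic_phiu:
  assumes "u \<in> UD S A c"
  shows "column_stochastic (S c) (phiu S A phi c u)"
proof
  fix x y
  assume "x \<in> S c" "y \<in> S c"
  moreover from assms \<open>x \<in> S c\<close> have "u x \<in> A c x"
    by (auto simp: UD_def)
  ultimately show "0 \<le> phiu S A phi c u y x"
    by (simp add: phiu_deterministic[OF assms] kernel_nonneg)
next
  fix x
  assume "x \<in> S c"
  moreover from assms \<open>x \<in> S c\<close> have "u x \<in> A c x"
    by (auto simp: UD_def)
  ultimately show "(\<Sum>y\<in>S c. phiu S A phi c u y x) = 1"
    by (simp add: phiu_deterministic[OF assms] kernel_sum)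
qed

lemma stationary_iff_stationary_dist:
  assumes "u \<in> UD S A c"
  shows "stationary S A phi lam c u \<eta> \<longleftrightarrow> column_stochastic.stationary_dist (S c) (phiu S A phi c u) \<eta>"
proof -
  interpret column_stochastic "S c" "phiu S A phi c u"
    using assms by (rule column_stochastic_phiu)
  have "(\<Sum>s'\<in>S c. lam c * (phiu S A phi c u s s' - (if s = s' then 1 else 0)) * \<eta> s')
          = lam c * ((\<Sum>s'\<in>S c. phiu S A phi c u s s' * \<eta> s') - \<eta> s)" if "s \<in> S c" for s
  proof -
    have "(\<Sum>s'\<in>S c. (if s = s' then 1 else 0) * \<eta> s') = \<eta> s"
      using that by (simp add: if_distrib[of "\<lambda>z. z * _"] cong: if_cong)
    then show ?thesis
      by (simp add: left_diff_distrib right_diff_distrib sum_subtractf mult.assoc flip: sum_distrib_left)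
  qed
  with rate_pos[of c] show ?thesis
    by (auto simp: stationary_def stationary_dist_def invariant_measure_def)
qed

lemma eta_stationary_dist:
  assumes "u \<in> UD S A c"
  shows "column_stochastic.stationary_dist (S c) (phiu S A phi c u) (eta S A phi lam c u)"
proof -
  interpret column_stochastic "S c" "phiu S A phi c u"
    using assms by (rule column_stochastic_phiu)
  have "\<exists>!K. recurrent_class S A phi c u K"
    using A2 assms by (simp add: assumption_A2_def)
  moreover have "recurrent_class S A phi c u = closed_class"
    by (simp add: fun_eq_iff recurrent_class_def closed_class_def trans_graph_def step_graph_def)
  ultimately have "\<exists>!K. closed_class K"
    by simp
  then have "\<exists>!\<eta>. stationary S A phi lam c u \<eta>"
    using ex1_stationary_dist stationary_iff_stationary_dist[OF assms] by simp
  then show ?thesis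
    unfolding eta_def using stationary_iff_stationary_dist[OF assms] by (metis theI')
qed

lemma eta_nonneg:
  assumes "u \<in> UD S A c" and "s \<in> S c"
  shows "0 \<le> eta S A phi lam c u s"
proof -
  interpret column_stochastic "S c" "phiu S A phi c u"
    using assms(1) by (rule column_stochastic_phiu)
  show ?thesis
    using eta_stationary_dist[OF assms(1)] assms(2) by (simp add: stationary_dist_def invariant_measure_def)
qed

lemma sum_eta:
  assumes "u \<in> UD S A c"
  shows "sum (eta S A phi lam c u) (S c) = 1"
proof -
  interpret column_stochastic "S c" "phiu S A phi c u"
    using assms by (rule column_stochastic_phiu)
  show ?thesis
    using eta_stationary_dist[OF assms] by (simp add: stationary_dist_def)
qed

abbreviation population :: "real ^ ('c \<times> ('s \<Rightarrow> 'a)) \<Rightarrow> 'c \<Rightarrow> 's \<Rightarrow> ('s \<Rightarrow> 'a) \<Rightarrow> real" where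
  "population \<equiv> stationary_population S A phi lam"

lemma policy_mass_population:
  assumes "u \<in> UD S A c"
  shows "(\<Sum>s\<in>S c. population x c s u) = x $ (c, u)"
  using sum_eta[OF assms] by (simp add: stationary_population_def flip: sum_distrib_right)

lemma inX_population:
  assumes x: "x \<in> simplex_product (UD S A) m"
  shows "inX S A m (population x)"
proof -
  have "(\<Sum>s\<in>S c. \<Sum>u\<in>UD S A c. population x c s u) = m c" for c
  proof -
    have "(\<Sum>s\<in>S c. \<Sum>u\<in>UD S A c. population x c s u) = (\<Sum>u\<in>UD S A c. \<Sum>s\<in>S c. population x c s u)"
      by (rule sum.swap)
    also have "\<dots> = (\<Sum>u\<in>UD S A c. x $ (c, u))"
      by (simp add: policy_mass_population)
    finally show ?thesis
      using x by (simp add: simplex_product_def)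
  qed
  with x show ?thesis
    by (auto simp: inX_def stationary_population_def simplex_product_def eta_nonneg)
qed

lemma continuous_on_Fval_population:
  assumes "assumption_A1 S A m r"
  shows "continuous_on (simplex_product (UD S A) m) (\<lambda>x. Fval S A phi lam r c u (population x))"
  unfolding Fval_def
proof (intro continuous_on_sum continuous_on_mult continuous_on_const)
  fix s a
  assume "s \<in> S c" and "a \<in> A c s"
  then have "a \<in> Aall S A c"
    by (auto simp: Aall_def)
  have "continuous_on (simplex_product (UD S A) m) (\<lambda>x. muSA S A (population x))"
    by (intro continuous_on_muSA)
      (simp add: stationary_population_def continuous_on_mult_left continuous_on_id[THEN continuous_on_component])
  moreover have "(\<lambda>x. muSA S A (population x)) ` simplex_product (UD S A) m \<subseteq> XSA S A m"
    using muSA_in_XSA inX_population by blast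
  ultimately show "continuous_on (simplex_product (UD S A) m) (\<lambda>x. r c s a (muSA S A (population x)))"
    by (rule continuous_on_compose2[OF continuous_on_reward[OF assms \<open>s \<in> S c\<close> \<open>a \<in> Aall S A c\<close>]])
qed

lemma MSNE_population:
  assumes x: "x \<in> simplex_product (UD S A) m"
    and eq: "nash_equilibrium (UD S A) (\<lambda>c u x. Fval S A phi lam r c u (population x)) x"
  shows "MSNE S A phi lam m r (population x)"
  unfolding MSNE_def
proof (intro conjI allI ballI impI)
  show "inX S A m (population x)"
    using x by (rule inX_population)
next
  fix c u v
  assume "u \<in> UD S A c" and "0 < (\<Sum>s\<in>S c. population x c s u)" and "v \<in> UD S A c"
  with eq show "Fval S A phi lam r c v (population x) \<le> Fval S A phi lam r c u (population x)"
    by (simp add: nash_equilibrium_def policy_mass_population)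
next
  fix c u s
  assume "u \<in> UD S A c"
  then show "population x c s u = eta S A phi lam c u s * (\<Sum>s'\<in>S c. population x c s' u)"
    by (simp only: policy_mass_population) (simp add: stationary_population_def)
qed

end

theorem theorem1:
  fixes S :: "'c::finite \<Rightarrow> 's::finite set"
    and A :: "'c \<Rightarrow> 's \<Rightarrow> 'a::finite set"
    and phi :: "'c \<Rightarrow> 's \<Rightarrow> 'a \<Rightarrow> 's \<Rightarrow> real"
    and lam :: "'c \<Rightarrow> real"
    and m :: "'c \<Rightarrow> real"
    and r :: "'c \<Rightarrow> 's \<Rightarrow> 'a \<Rightarrow> real ^ ('c \<times> 's \<times> 'a) \<Rightarrow> real"
  assumes mass_pos: "\<forall>c. 0 < m c"
    and rate_pos: "\<forall>c. 0 < lam c"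
    and actions: "\<forall>c. \<forall>s\<in>S c. A c s \<noteq> {} \<and> finite (A c s)"
    and kernel: "\<forall>c. \<forall>s\<in>S c. \<forall>a\<in>A c s.
                   (\<forall>s'\<in>S c. 0 \<le> phi c s a s') \<and> (\<Sum>s'\<in>S c. phi c s a s') = 1"
    and A1: "assumption_A1 S A m r"
    and A2: "assumption_A2 S A phi"
  shows "\<exists>\<mu>. MSNE S A phi lam m r \<mu>"
proof -
  interpret mean_field_dynamics S A phi lam
    using rate_pos kernel A2 by unfold_locales auto
  let ?F = "\<lambda>c u x. Fval S A phi lam r c u (stationary_population S A phi lam x)"
  have "UD S A c \<noteq> {}" for c
    using actions by (auto simp: UD_def PiE_eq_empty_iff)
  then obtain x where "x \<in> simplex_product (UD S A) m" and "nash_equilibrium (UD S A) ?F x"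
    using nash_equilibrium_exists[of "UD S A" m ?F] mass_pos continuous_on_Fval_population[OF A1]
    by blast
  then show ?thesis
    using MSNE_population by blast
qed

end
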